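(* Let $A$ be a row-finite $\omega\times\omega$ complex matrix with infinite deficiency, and let $H=(h_{ij})=QA$ be a quasi-Hermite form of $A$ ($Q$ nonsingular row-finite). Let $j_0<j_1<\cdots$ index the nonzero rows of $H$, $\mu_n=\ell(H_{j_n})$, and $S=\omega\setminus\{\mu_0,\mu_1,\dots\}=\{s_0<s_1<\cdots\}$. For $s\in S$ define $\xi^{(s)}\in\mathbb{C}^\omega$ by $\xi^{(s)}_s=1$, $\xi^{(s)}_{\mu_n}=-h_{j_n s}$ for all $n$, and $\xi^{(s)}_t=0$ for $t\in S\setminus\{s\}$. Then $\{\xi^{(s_k)}\}_{k\in\omega}$ is a Schauder basis of $RNS(A)=\{y\in\mathbb{C}^\omega: Ay=0\}$ regarded as a subspace of the Fréchet space $\mathfrak{s}$: every $x\in RNS(A)$ satisfies $x=\sum_{k=0}^{\infty}x_{s_k}\xi^{(s_k)}$ with convergence in $\mathfrak{s}$, and if $x=\sum_{k=0}^\infty z_k\xi^{(s_k)}$ in $\mathfrak{s}$ for some scalars $z_k$, then $z_k=x_{s_k}$ for all $k$.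
   Context: $\omega=\{0,1,2,\dots\}$; $\mathbb{C}^\omega$ is the space of all complex sequences; $(Ay)_n=\sum_k a_{nk}y_k$. $\mathfrak{s}$ denotes $\mathbb{C}^\omega$ with the metric $\varrho(q,p)=\sum_{i\ge0}2^{-i}\frac{|q_i-p_i|}{1+|q_i-p_i|}$ (coordinatewise convergence). Row-finite: finitely many nonzero entries per row; nonsingular: invertible in the algebra of row-finite matrices. Length $\ell(x)$ of a finitely supported $x\neq0$: largest index of a nonzero coordinate. Quasi-Hermite form: with $J$ the indices of nonzero rows and $\ell_j=\ell(H_j)$, (i) $j<j'$ in $J$ implies $\ell_j<\ell_{j'}$; (ii) $h_{j\ell_j}=1$; (iii) $h_{m\ell_j}=0$ for all $m\neq j$. Deficiency: codimension of the row space of $A$ in the space of finitely supported sequences; it equals $\operatorname{card}(S)$. *)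

theory Defs
  imports "HOL-Analysis.Analysis" "HOL-Library.Infinite_Set"
begin

type_synonym cmat = "nat \<Rightarrow> nat \<Rightarrow> complex"
type_synonym cseq = "nat \<Rightarrow> complex"

definition fin_supp :: "cseq \<Rightarrow> bool" where
  "fin_supp x \<longleftrightarrow> finite {k. x k \<noteq> 0}"

definition row_finite :: "cmat \<Rightarrow> bool" where
  "row_finite A \<longleftrightarrow> (\<forall>n. fin_supp (A n))"

definition mat_vec :: "cmat \<Rightarrow> cseq \<Rightarrow> cseq" where
  "mat_vec A y = (\<lambda>n. \<Sum>k\<in>{k. A n k \<noteq> 0}. A n k * y k)"

definition mat_mult :: "cmat \<Rightarrow> cmat \<Rightarrow> cmat" where
  "mat_mult P B = (\<lambda>n k. \<Sum>j\<in>{j. P n j \<noteq> 0}. P n j * B j k)"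

definition id_mat :: cmat where
  "id_mat = (\<lambda>n k. if n = k then 1 else 0)"

definition nonsingular :: "cmat \<Rightarrow> bool" where
  "nonsingular Q \<longleftrightarrow> row_finite Q \<and>
     (\<exists>B. row_finite B \<and> mat_mult B Q = id_mat \<and> mat_mult Q B = id_mat)"

definition row_space :: "cmat \<Rightarrow> cseq set" where
  "row_space A = {(\<lambda>k. \<Sum>j\<in>G. c j * A j k) | G c. finite G}"

text \<open>Infinite deficiency: the row space has infinite codimension in the space of
  finitely supported sequences, i.e. no finite family of finitely supported sequences
  together with the row space spans all finitely supported sequences.\<close>
definition infinite_deficiency :: "cmat \<Rightarrow> bool" where
  "infinite_deficiency A \<longleftrightarrow>
     (\<forall>F. finite F \<and> (\<forall>f\<in>F. fin_supp f) \<longrightarrow>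
        (\<exists>x. fin_supp x \<and>
           \<not> (\<exists>r\<in>row_space A. \<exists>d. x = (\<lambda>k. r k + (\<Sum>f\<in>F. d f * f k)))))"

definition len :: "cseq \<Rightarrow> nat" where
  "len x = Max {k. x k \<noteq> 0}"

definition nonzero_rows :: "cmat \<Rightarrow> nat set" where
  "nonzero_rows H = {j. H j \<noteq> (\<lambda>k. 0)}"

definition quasi_hermite :: "cmat \<Rightarrow> bool" where
  "quasi_hermite H \<longleftrightarrow>
     (\<forall>j\<in>nonzero_rows H. \<forall>j'\<in>nonzero_rows H. j < j' \<longrightarrow> len (H j) < len (H j')) \<and>
     (\<forall>j\<in>nonzero_rows H. H j (len (H j)) = 1) \<and>
     (\<forall>j\<in>nonzero_rows H. \<forall>m. m \<noteq> j \<longrightarrow> H m (len (H j)) = 0)"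

definition RNS :: "cmat \<Rightarrow> cseq set" where
  "RNS A = {y. mat_vec A y = (\<lambda>n. 0)}"

definition pivots :: "cmat \<Rightarrow> nat set" where
  "pivots H = len ` (H ` nonzero_rows H)"

definition free_idx :: "cmat \<Rightarrow> nat set" where
  "free_idx H = UNIV - pivots H"

definition xi :: "cmat \<Rightarrow> nat \<Rightarrow> cseq" where
  "xi H s = (\<lambda>t. if t = s then 1
                 else if t \<in> pivots H
                   then - H (THE j. j \<in> nonzero_rows H \<and> len (H j) = t) s
                 else 0)"

definition rho :: "cseq \<Rightarrow> cseq \<Rightarrow> real" where
  "rho q p = (\<Sum>i. (1/2)^i * (cmod (q i - p i) / (1 + cmod (q i - p i))))"

definition converges_s :: "(nat \<Rightarrow> cseq) \<Rightarrow> cseq \<Rightarrow> bool" where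
  "converges_s f x \<longleftrightarrow> (\<lambda>N. rho (f N) x) \<longlonglongrightarrow> 0"

end

theory Submission
  imports Defs
begin

(* Convergence in the Frechet space s is coordinatewise convergence, so it
   suffices to check each coordinate of the partial sums of the series
   sum_k z_k xi^(s_k).  At a free index s_m only xi^(s_m) is nonzero, so the partial sums
   are eventually z_m there; this gives uniqueness of the coefficients.  At a pivot
   mu = len (H_j), the j-th equation of H x = 0 (which follows from A x = 0 since H = Q A)
   expresses x_mu as minus the sum of h_{ju} x_u over the free indices u < mu, which is
   exactly the mu-th coordinate of a partial sum once it contains all free indices below
   mu.  The enumeration s_0 < s_1 < ... is only meaningful because S is infinite; this is
   where infinite deficiency enters: if S were finite, every finitely supported sequence
   would agree with a row combination of A on the pivots, hence differ from it only by
   a combination of the finitely many unit vectors at free indices. *)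

section \<open>Convergence in the space s\<close>

lemma rho_term_le_geometric:
  "(1/2::real)^i * (cmod (q i - p i) / (1 + cmod (q i - p i))) \<le> (1/2)^i"
proof (rule mult_left_le)
  have "0 < 1 + cmod (q i - p i)" by (simp add: add_pos_nonneg)
  thus "cmod (q i - p i) / (1 + cmod (q i - p i)) \<le> 1" by (simp add: pos_divide_le_eq)
qed simp

lemma rho_summable:
  "summable (\<lambda>i. (1/2::real)^i * (cmod (q i - p i) / (1 + cmod (q i - p i))))"
  by (rule summable_comparison_test[where g="\<lambda>i. (1/2::real)^i"])
     (use rho_term_le_geometric in \<open>auto intro!: summable_geometric\<close>)

lemma rho_ge_term: "(1/2::real)^i * (cmod (q i - p i) / (1 + cmod (q i - p i))) \<le> rho q p"
proof -
  have "(\<Sum>i\<in>{i}. (1/2::real)^i * (cmod (q i - p i) / (1 + cmod (q i - p i)))) \<le> rho q p"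
    unfolding rho_def by (rule sum_le_suminf[OF rho_summable]) auto
  thus ?thesis by simp
qed

lemma converges_s_eventually_const_coord:
  assumes "converges_s f x" and "eventually (\<lambda>N. f N i = c) sequentially"
  shows "c = x i"
proof (rule ccontr)
  assume "c \<noteq> x i"
  define d where "d = cmod (c - x i)"
  have "d > 0" using \<open>c \<noteq> x i\<close> by (simp add: d_def)
  define \<delta> where "\<delta> = (1/2::real)^i * (d / (1 + d))"
  have "\<delta> > 0" using \<open>d > 0\<close> by (simp add: \<delta>_def)
  have "eventually (\<lambda>N. \<delta> \<le> rho (f N) x) sequentially"
    using assms(2) by eventually_elim (use rho_ge_term[of i] in \<open>auto simp: \<delta>_def d_def\<close>)
  moreover have "eventually (\<lambda>N. dist (rho (f N) x) 0 < \<delta>) sequentially"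
    using assms(1) \<open>\<delta> > 0\<close> unfolding converges_s_def tendsto_iff by blast
  ultimately have "eventually (\<lambda>N. False) sequentially"
    by eventually_elim auto
  thus False by simp
qed

text \<open>Conversely, eventual agreement in every coordinate implies convergence in s:
  the first M coordinates eventually contribute nothing and the tail is at most 2^(1-M).\<close>
lemma converges_s_if_coordinatewise_eventually:
  assumes "\<And>i. eventually (\<lambda>N. f N i = x i) sequentially"
  shows "converges_s f x"
  unfolding converges_s_def tendsto_iff
proof (intro allI impI)
  fix r :: real assume "0 < r"
  then obtain M where M: "(1/2::real)^M < r/2" using real_arch_pow_inv[of "r/2" "1/2"] by auto
  have "eventually (\<lambda>N. \<forall>i\<in>{..<M}. f N i = x i) sequentially"
    by (rule eventually_ball_finite) (use assms in auto)
  then show "eventually (\<lambda>N. dist (rho (f N) x) 0 < r) sequentially"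
  proof eventually_elim
    case (elim N)
    define a where "a = (\<lambda>i. (1/2::real)^i * (cmod (f N i - x i) / (1 + cmod (f N i - x i))))"
    have sa: "summable a" unfolding a_def by (rule rho_summable)
    have "rho (f N) x = (\<Sum>i. a (i + M)) + sum a {..<M}"
      unfolding rho_def a_def[symmetric] by (rule suminf_split_initial_segment[OF sa])
    also have "sum a {..<M} = 0" using elim by (auto simp: a_def)
    also have "(\<Sum>i. a (i + M)) \<le> (\<Sum>i. (1/2::real)^(i+M))"
      by (rule suminf_le)
         (use rho_term_le_geometric sa in
           \<open>auto simp: a_def intro!: summable_ignore_initial_segment summable_geometric\<close>)
    also have "(\<Sum>i. (1/2::real)^(i+M)) = (1/2)^M * 2"
      by (simp add: power_add suminf_mult2[symmetric] suminf_geometric mult.commute)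
    finally have "rho (f N) x \<le> (1/2)^M * 2" by simp
    moreover have "0 \<le> rho (f N) x" unfolding rho_def by (rule suminf_nonneg[OF rho_summable]) simp
    ultimately show ?case using M by simp
  qed
qed

section \<open>Row-finite matrices\<close>

lemma mat_mult_row_supp:
  "{k. mat_mult Q A n k \<noteq> 0} \<subseteq> (\<Union>j\<in>{j. Q n j \<noteq> 0}. {k. A j k \<noteq> 0})"
proof
  fix k assume "k \<in> {k. mat_mult Q A n k \<noteq> 0}"
  hence "(\<Sum>j\<in>{j. Q n j \<noteq> 0}. Q n j * A j k) \<noteq> 0" by (simp add: mat_mult_def)
  then obtain j where "j \<in> {j. Q n j \<noteq> 0}" "Q n j * A j k \<noteq> 0"
    by (rule sum.not_neutral_contains_not_neutral)
  thus "k \<in> (\<Union>j\<in>{j. Q n j \<noteq> 0}. {k. A j k \<noteq> 0})" by auto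
qed

lemma row_finite_mat_mult:
  assumes "row_finite Q" "row_finite A"
  shows "row_finite (mat_mult Q A)"
  using assms finite_subset[OF mat_mult_row_supp]
  by (auto simp: row_finite_def fin_supp_def)

lemma sum_over_support:
  "finite K \<Longrightarrow> {k. (f k::complex) \<noteq> 0} \<subseteq> K \<Longrightarrow>
     (\<Sum>k\<in>{k. f k \<noteq> 0}. f k * g k) = (\<Sum>k\<in>K. f k * g k)"
  by (intro sum.mono_neutral_left) auto

lemma mat_vec_mat_mult:
  assumes "row_finite Q" "row_finite A"
  shows "mat_vec (mat_mult Q A) x = mat_vec Q (mat_vec A x)"
proof
  fix n
  let ?J = "{j. Q n j \<noteq> 0}"
  let ?K = "\<Union>j\<in>?J. {k. A j k \<noteq> 0}"
  have fK: "finite ?K" using assms by (auto simp: row_finite_def fin_supp_def)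
  have "mat_vec (mat_mult Q A) x n = (\<Sum>k\<in>?K. mat_mult Q A n k * x k)"
    unfolding mat_vec_def by (rule sum_over_support[OF fK mat_mult_row_supp[of Q A n]])
  also have "\<dots> = (\<Sum>j\<in>?J. Q n j * (\<Sum>k\<in>?K. A j k * x k))"
    by (simp add: mat_mult_def sum_distrib_right sum_distrib_left mult.assoc sum.swap[of _ ?K])
  also have "\<dots> = (\<Sum>j\<in>?J. Q n j * mat_vec A x j)"
  proof (rule sum.cong[OF refl])
    fix j assume "j \<in> ?J"
    hence "mat_vec A x j = (\<Sum>k\<in>?K. A j k * x k)"
      unfolding mat_vec_def by (intro sum_over_support[OF fK]) auto
    thus "Q n j * (\<Sum>k\<in>?K. A j k * x k) = Q n j * mat_vec A x j" by simp
  qed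
  finally show "mat_vec (mat_mult Q A) x n = mat_vec Q (mat_vec A x) n"
    by (simp add: mat_vec_def)
qed

lemma RNS_subset_RNS_mat_mult:
  assumes "row_finite Q" "row_finite A"
  shows "RNS A \<subseteq> RNS (mat_mult Q A)"
proof
  fix x assume "x \<in> RNS A"
  hence "mat_vec (mat_mult Q A) x = mat_vec Q (\<lambda>n. 0)"
    by (simp add: RNS_def mat_vec_mat_mult[OF assms])
  thus "x \<in> RNS (mat_mult Q A)" by (simp add: RNS_def mat_vec_def)
qed

lemma row_combination_mat_mult_in_row_space:
  assumes "row_finite Q" "finite J"
  shows "(\<lambda>k. \<Sum>j\<in>J. c j * mat_mult Q A j k) \<in> row_space A"
proof -
  define G where "G = (\<Union>j\<in>J. {i. Q j i \<noteq> 0})"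
  have finG: "finite G" using assms by (auto simp: G_def row_finite_def fin_supp_def)
  define b where "b = (\<lambda>i. \<Sum>j\<in>J. c j * Q j i)"
  have "(\<lambda>k. \<Sum>j\<in>J. c j * mat_mult Q A j k) = (\<lambda>k. \<Sum>i\<in>G. b i * A i k)"
  proof
    fix k
    have "(\<Sum>i\<in>G. b i * A i k) = (\<Sum>j\<in>J. c j * (\<Sum>i\<in>G. Q j i * A i k))"
      by (simp add: b_def sum_distrib_right sum_distrib_left mult.assoc sum.swap[of _ G])
    also have "\<dots> = (\<Sum>j\<in>J. c j * mat_mult Q A j k)"
    proof (rule sum.cong[OF refl])
      fix j assume "j \<in> J"
      hence "mat_mult Q A j k = (\<Sum>i\<in>G. Q j i * A i k)"
        unfolding mat_mult_def by (intro sum_over_support[OF finG]) (auto simp: G_def)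
      thus "c j * (\<Sum>i\<in>G. Q j i * A i k) = c j * mat_mult Q A j k" by simp
    qed
    finally show "(\<Sum>j\<in>J. c j * mat_mult Q A j k) = (\<Sum>i\<in>G. b i * A i k)" by (rule sym)
  qed
  thus ?thesis using finG unfolding row_space_def by blast
qed

section \<open>Pivots of a quasi-Hermite form\<close>

lemma le_len:
  assumes "fin_supp f" "f k \<noteq> 0"
  shows "k \<le> len f"
  using Max_ge[of "{k. f k \<noteq> 0}"] assms by (auto simp: len_def fin_supp_def)

lemma quasi_hermite_len_inj:
  assumes "quasi_hermite H" "j \<in> nonzero_rows H" "j' \<in> nonzero_rows H"
    and "len (H j) = len (H j')"
  shows "j = j'"
  using assms unfolding quasi_hermite_def by (metis less_irrefl linorder_neqE_nat)

lemma quasi_hermite_pivot_row: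
  assumes "quasi_hermite H" "j \<in> nonzero_rows H"
  shows "(THE j'. j' \<in> nonzero_rows H \<and> len (H j') = len (H j)) = j"
  by (rule the_equality) (use assms quasi_hermite_len_inj in auto)

lemma quasi_hermite_other_pivot:
  assumes "quasi_hermite H" "j \<in> nonzero_rows H" "k \<in> pivots H" "k \<noteq> len (H j)"
  shows "H j k = 0"
proof -
  obtain j' where "j' \<in> nonzero_rows H" "k = len (H j')"
    using assms(3) by (auto simp: pivots_def)
  thus ?thesis using assms unfolding quasi_hermite_def by auto
qed

lemma xi_at_pivot:
  assumes "quasi_hermite H" "j \<in> nonzero_rows H" "s \<in> free_idx H"
  shows "xi H s (len (H j)) = - H j s"
proof -
  have "len (H j) \<in> pivots H" using assms(2) by (auto simp: pivots_def)
  moreover hence "len (H j) \<noteq> s" using assms(3) by (auto simp: free_idx_def)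
  ultimately show ?thesis using quasi_hermite_pivot_row[OF assms(1,2)] by (simp add: xi_def)
qed

lemma xi_at_free:
  assumes "t \<in> free_idx H"
  shows "xi H s t = (if t = s then 1 else 0)"
  using assms by (auto simp: xi_def free_idx_def)

lemma pivot_coord_from_row_equation:
  assumes "quasi_hermite H" "row_finite H" "j \<in> nonzero_rows H" "mat_vec H x j = 0"
  shows "(\<Sum>u\<in>{u. H j u \<noteq> 0} - {len (H j)}. H j u * x u) = - x (len (H j))"
proof -
  let ?U = "{u. H j u \<noteq> 0}" and ?t = "len (H j)"
  have "finite ?U" using assms(2) by (simp add: row_finite_def fin_supp_def)
  have "H j ?t = 1" using assms(1,3) unfolding quasi_hermite_def by auto
  hence "?t \<in> ?U" by simp
  have "(\<Sum>u\<in>?U. H j u * x u) = x ?t + (\<Sum>u\<in>?U - {?t}. H j u * x u)"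
    by (subst sum.remove[OF \<open>finite ?U\<close> \<open>?t \<in> ?U\<close>]) (simp add: \<open>H j ?t = 1\<close>)
  moreover have "(\<Sum>u\<in>?U. H j u * x u) = 0" using assms(4) by (simp add: mat_vec_def)
  ultimately show ?thesis by (simp add: add_eq_0_iff)
qed

lemma row_support_free_below_pivot:
  assumes "quasi_hermite H" "row_finite H" "j \<in> nonzero_rows H"
  shows "{u. H j u \<noteq> 0} - {len (H j)} \<subseteq> free_idx H \<inter> {..len (H j)}"
  using quasi_hermite_other_pivot[OF assms(1,3)] le_len[of "H j"] assms(2)
  by (auto simp: free_idx_def row_finite_def)

section \<open>Infinite deficiency makes the set of free indices infinite\<close>

text \<open>Every finitely supported x agrees on the pivots with a combination of rows of A,
  namely with the sum of x(mu_j) H_j over the finitely many rows j with x(mu_j) nonzero.\<close>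
lemma pivot_reduction:
  assumes "row_finite Q" "H = mat_mult Q A" "quasi_hermite H" "fin_supp x"
  shows "\<exists>r\<in>row_space A. \<forall>k\<in>pivots H. r k = x k"
proof -
  define J where "J = {j\<in>nonzero_rows H. x (len (H j)) \<noteq> 0}"
  have "inj_on (\<lambda>j. len (H j)) J"
    by (rule inj_onI) (use quasi_hermite_len_inj[OF assms(3)] in \<open>auto simp: J_def\<close>)
  moreover have "(\<lambda>j. len (H j)) ` J \<subseteq> {k. x k \<noteq> 0}" by (auto simp: J_def)
  moreover have "finite {k. x k \<noteq> 0}" using assms(4) by (simp add: fin_supp_def)
  ultimately have finJ: "finite J" by (metis finite_imageD finite_subset)
  define r where "r = (\<lambda>k. \<Sum>j\<in>J. x (len (H j)) * H j k)"
  have "r \<in> row_space A"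
    unfolding r_def assms(2) by (rule row_combination_mat_mult_in_row_space[OF assms(1) finJ])
  moreover have "r k = x k" if k: "k \<in> pivots H" for k
  proof -
    obtain j' where j': "j' \<in> nonzero_rows H" "k = len (H j')"
      using k by (auto simp: pivots_def)
    have "r k = (\<Sum>j\<in>J. if j = j' then x k else 0)"
      unfolding r_def by (rule sum.cong) (use assms(3) j' in \<open>auto simp: quasi_hermite_def\<close>)
    also have "\<dots> = x k" using finJ j' by (auto simp: J_def)
    finally show ?thesis .
  qed
  ultimately show ?thesis by blast
qed

text \<open>If S were finite, every finitely supported x would be a row combination of A plus
  a combination of the finitely many unit vectors at free indices, contradicting
  infinite deficiency.\<close>
lemma infinite_free_idx:
  assumes "infinite_deficiency A" "row_finite Q" "H = mat_mult Q A" "quasi_hermite H"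
  shows "infinite (free_idx H)"
proof
  assume finS: "finite (free_idx H)"
  define e where "e = (\<lambda>s::nat. \<lambda>k::nat. if k = s then (1::complex) else 0)"
  define F where "F = e ` free_idx H"
  have "finite F \<and> (\<forall>f\<in>F. fin_supp f)"
    using finS by (auto simp: F_def e_def fin_supp_def)
  then obtain x where "fin_supp x"
    and notrep: "\<not> (\<exists>r\<in>row_space A. \<exists>d. x = (\<lambda>k. r k + (\<Sum>f\<in>F. d f * f k)))"
    using assms(1) unfolding infinite_deficiency_def by blast
  then obtain r where r: "r \<in> row_space A" "\<forall>k\<in>pivots H. r k = x k"
    using pivot_reduction[OF assms(2-4)] by blast
  (* x - r vanishes on the pivots, so it is the combination of the unit vectors in F
     with coefficients d. *)
  define d where "d = (\<lambda>f::cseq. x (LEAST k. f k \<noteq> 0) - r (LEAST k. f k \<noteq> 0))"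
  have "inj_on e (free_idx H)" by (rule inj_onI) (metis e_def zero_neq_one)
  have "x = (\<lambda>k. r k + (\<Sum>f\<in>F. d f * f k))"
  proof
    fix k
    have "(\<Sum>f\<in>F. d f * f k) = (\<Sum>s\<in>free_idx H. d (e s) * e s k)"
      unfolding F_def by (rule sum.reindex[OF \<open>inj_on e _\<close>, unfolded comp_def])
    also have "\<dots> = (\<Sum>s\<in>free_idx H. if s = k then x k - r k else 0)"
    proof (rule sum.cong[OF refl])
      fix s
      have "(LEAST k. e s k \<noteq> 0) = s" by (rule Least_equality) (auto simp: e_def split: if_splits)
      thus "d (e s) * e s k = (if s = k then x k - r k else 0)" by (auto simp: d_def e_def)
    qed
    also have "\<dots> = x k - r k" using finS r(2) by (auto simp: free_idx_def)
    finally show "x k = r k + (\<Sum>f\<in>F. d f * f k)" by simp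
  qed
  thus False using notrep r(1) by blast
qed

lemma partial_sums_at_free_index:
  assumes "infinite (free_idx H)"
  shows "eventually (\<lambda>N. (\<Sum>k<N. z k * xi H (enumerate (free_idx H) k)
            (enumerate (free_idx H) m)) = z m) sequentially"
proof -
  let ?s = "enumerate (free_idx H)"
  have "inj ?s" using strict_mono_enumerate[OF assms] by (rule strict_mono_imp_inj_on)
  have "(\<Sum>k<N. z k * xi H (?s k) (?s m)) = z m" if "N \<ge> Suc m" for N
  proof -
    have "(\<Sum>k<N. z k * xi H (?s k) (?s m)) = (\<Sum>k<N. if k = m then z m else 0)"
      using xi_at_free[OF enumerate_in_set[OF assms, of m]] \<open>inj ?s\<close>
      by (intro sum.cong) (auto dest: injD)
    also have "\<dots> = z m" using that by simp
    finally show ?thesis .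
  qed
  thus ?thesis unfolding eventually_sequentially by blast
qed

text \<open>At a pivot t, once the partial sum contains all free indices up to t, its value is
  minus the sum of h_{ju} x_u over those indices, which is x_t by the row equation.\<close>
lemma partial_sums_at_pivot:
  assumes "infinite (free_idx H)" "quasi_hermite H" "row_finite H"
    and "x \<in> RNS H" "t \<in> pivots H"
  shows "eventually (\<lambda>N. (\<Sum>k<N. x (enumerate (free_idx H) k) *
            xi H (enumerate (free_idx H) k) t) = x t) sequentially"
proof -
  let ?S = "free_idx H" and ?s = "enumerate (free_idx H)"
  obtain j where j: "j \<in> nonzero_rows H" and tj: "t = len (H j)"
    using assms(5) by (auto simp: pivots_def)
  let ?U = "{u. H j u \<noteq> 0} - {t}"
  have sinj: "inj ?s" using strict_mono_enumerate[OF assms(1)] by (rule strict_mono_imp_inj_on)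
  have row_eq: "(\<Sum>u\<in>?U. H j u * x u) = - x t"
    using pivot_coord_from_row_equation[OF assms(2,3) j] assms(4) tj by (simp add: RNS_def)
  have "(\<Sum>k<N. x (?s k) * xi H (?s k) t) = x t" if N: "N \<ge> Suc t" for N
  proof -
    have "(\<Sum>k<N. x (?s k) * xi H (?s k) t) = - (\<Sum>u\<in>?s ` {..<N}. H j u * x u)"
      using xi_at_pivot[OF assms(2) j enumerate_in_set[OF assms(1)]] tj
      by (simp add: sum_negf sum.reindex[OF inj_on_subset[OF sinj]] mult.commute)
    also have "(\<Sum>u\<in>?s ` {..<N}. H j u * x u) = (\<Sum>u\<in>?U. H j u * x u)"
    proof (rule sum.mono_neutral_right)
      show "?U \<subseteq> ?s ` {..<N}"
      proof
        fix u assume "u \<in> ?U"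
        hence "u \<in> ?S" "u \<le> t"
          using row_support_free_below_pivot[OF assms(2,3) j] tj by auto
        then obtain k where k: "?s k = u" using enumerate_Ex[OF assms(1)] by blast
        have "k \<le> ?s k" by (rule seq_suble[OF strict_mono_enumerate[OF assms(1)]])
        hence "k < N" using k \<open>u \<le> t\<close> N by simp
        thus "u \<in> ?s ` {..<N}" using k by blast
      qed
      show "\<forall>i\<in>?s ` {..<N} - ?U. H j i * x i = 0"
        using assms(5) enumerate_in_set[OF assms(1)] by (auto simp: free_idx_def)
    qed simp
    finally show ?thesis using row_eq by simp
  qed
  thus ?thesis unfolding eventually_sequentially by blast
qed

theorem theorem6:
  fixes A Q H :: cmat
  assumes "row_finite A"
    and "infinite_deficiency A"
    and "nonsingular Q"
    and "H = mat_mult Q A"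
    and "quasi_hermite H"
  shows "(\<forall>x\<in>RNS A. converges_s
            (\<lambda>N. \<lambda>t. \<Sum>k<N. x (enumerate (free_idx H) k) * xi H (enumerate (free_idx H) k) t) x)
       \<and> (\<forall>x\<in>RNS A. \<forall>z::nat \<Rightarrow> complex.
            converges_s (\<lambda>N. \<lambda>t. \<Sum>k<N. z k * xi H (enumerate (free_idx H) k) t) x
            \<longrightarrow> (\<forall>k. z k = x (enumerate (free_idx H) k)))"
proof -
  have rfQ: "row_finite Q" using assms(3) by (simp add: nonsingular_def)
  have rfH: "row_finite H" using row_finite_mat_mult[OF rfQ assms(1)] assms(4) by simp
  have infS: "infinite (free_idx H)" by (rule infinite_free_idx[OF assms(2) rfQ assms(4,5)])
  have RNS_H: "RNS A \<subseteq> RNS H"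
    using RNS_subset_RNS_mat_mult[OF rfQ assms(1)] assms(4) by simp
  show ?thesis
  proof (intro conjI ballI allI impI)
    fix x assume x: "x \<in> RNS A"
    show "converges_s (\<lambda>N t. \<Sum>k<N. x (enumerate (free_idx H) k) *
            xi H (enumerate (free_idx H) k) t) x"
    proof (rule converges_s_if_coordinatewise_eventually)
      fix t
      show "eventually (\<lambda>N. (\<Sum>k<N. x (enumerate (free_idx H) k) *
              xi H (enumerate (free_idx H) k) t) = x t) sequentially"
      proof (cases "t \<in> free_idx H")
        case True
        then obtain m where "enumerate (free_idx H) m = t" using enumerate_Ex[OF infS] by blast
        thus ?thesis
          using partial_sums_at_free_index[OF infS, of "\<lambda>k. x (enumerate (free_idx H) k)" m]
          by simp
      next
        case False
        thus ?thesis using partial_sums_at_pivot[OF infS assms(5) rfH] x RNS_H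
          by (auto simp: free_idx_def)
      qed
    qed
  next
    fix x z k
    assume "converges_s (\<lambda>N t. \<Sum>k<N. z k * xi H (enumerate (free_idx H) k) t) x"
    thus "z k = x (enumerate (free_idx H) k)"
      by (rule converges_s_eventually_const_coord) (rule partial_sums_at_free_index[OF infS])
  qed
qed

end
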